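(* Let $G$ be a finite simple graph, let $P$ be a pebble distribution on $G$, and let $U$ be a unit distribution of nonzero size with all pebbles on a vertex $u$, with $P$ and $U$ disjoint. Then every cooperation vertex (with respect to $P$ and $U$) has a neighbor that has cooperation excess.
   Context: A pebble distribution is a function $V(G)\to\mathbb{Z}_{\geq0}$; $(P+U)(v)=P(v)+U(v)$; disjoint means no vertex has pebbles under both. A pebbling move removes two pebbles from a vertex and adds one to an adjacent vertex. A vertex $v$ is $k$-reachable under $P$ if some executable sequence of pebbling moves yields at least $k$ pebbles on $v$; reachable means $1$-reachable. $\mathrm{reach}(P,v)$ is the largest such $k$; $\mathrm{exc}(P,v)=\mathrm{reach}(P,v)-1$ if $v$ is reachable, else $0$. A cooperation vertex is a vertex reachable under $P+U$ but reachable under neither $P$ nor $U$. The cooperation excess of a vertex $v$ is $\mathrm{exc}(P+U,v)-\mathrm{exc}(P,v)-\mathrm{exc}(U,v)$; $v$ has cooperation excess if this is positive. *)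

theory Defs
  imports Main
begin

definition simple_graph :: "'a set \<Rightarrow> ('a \<Rightarrow> 'a \<Rightarrow> bool) \<Rightarrow> bool" where
  "simple_graph V E \<longleftrightarrow> finite V \<and> (\<forall>x y. E x y \<longrightarrow> x \<in> V \<and> y \<in> V)
     \<and> (\<forall>x y. E x y \<longrightarrow> E y x) \<and> (\<forall>x. \<not> E x x)"

definition distribution :: "'a set \<Rightarrow> ('a \<Rightarrow> nat) \<Rightarrow> bool" where
  "distribution V P \<longleftrightarrow> (\<forall>x. x \<notin> V \<longrightarrow> P x = 0)"

definition dist_add :: "('a \<Rightarrow> nat) \<Rightarrow> ('a \<Rightarrow> nat) \<Rightarrow> ('a \<Rightarrow> nat)" where
  "dist_add P U = (\<lambda>x. P x + U x)"

definition disjoint_dist :: "('a \<Rightarrow> nat) \<Rightarrow> ('a \<Rightarrow> nat) \<Rightarrow> bool" where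
  "disjoint_dist P U \<longleftrightarrow> (\<forall>x. P x = 0 \<or> U x = 0)"

definition pebbling_move :: "('a \<Rightarrow> 'a \<Rightarrow> bool) \<Rightarrow> ('a \<Rightarrow> nat) \<Rightarrow> ('a \<Rightarrow> nat) \<Rightarrow> bool" where
  "pebbling_move E P Q \<longleftrightarrow>
     (\<exists>v w. E v w \<and> 2 \<le> P v \<and> Q = P(v := P v - 2, w := P w + 1))"

definition k_reachable :: "('a \<Rightarrow> 'a \<Rightarrow> bool) \<Rightarrow> ('a \<Rightarrow> nat) \<Rightarrow> 'a \<Rightarrow> nat \<Rightarrow> bool" where
  "k_reachable E P v k \<longleftrightarrow> (\<exists>Q. (pebbling_move E)\<^sup>*\<^sup>* P Q \<and> k \<le> Q v)"

definition reachable :: "('a \<Rightarrow> 'a \<Rightarrow> bool) \<Rightarrow> ('a \<Rightarrow> nat) \<Rightarrow> 'a \<Rightarrow> bool" where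
  "reachable E P v \<longleftrightarrow> k_reachable E P v 1"

definition reach :: "('a \<Rightarrow> 'a \<Rightarrow> bool) \<Rightarrow> ('a \<Rightarrow> nat) \<Rightarrow> 'a \<Rightarrow> nat" where
  "reach E P v = (GREATEST k. k_reachable E P v k)"

definition exc :: "('a \<Rightarrow> 'a \<Rightarrow> bool) \<Rightarrow> ('a \<Rightarrow> nat) \<Rightarrow> 'a \<Rightarrow> nat" where
  "exc E P v = (if reachable E P v then reach E P v - 1 else 0)"

definition cooperation_vertex ::
  "('a \<Rightarrow> 'a \<Rightarrow> bool) \<Rightarrow> ('a \<Rightarrow> nat) \<Rightarrow> ('a \<Rightarrow> nat) \<Rightarrow> 'a \<Rightarrow> bool" where
  "cooperation_vertex E P U v \<longleftrightarrow>
     reachable E (dist_add P U) v \<and> \<not> reachable E P v \<and> \<not> reachable E U v"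

definition cooperation_excess ::
  "('a \<Rightarrow> 'a \<Rightarrow> bool) \<Rightarrow> ('a \<Rightarrow> nat) \<Rightarrow> ('a \<Rightarrow> nat) \<Rightarrow> 'a \<Rightarrow> int" where
  "cooperation_excess E P U v =
     int (exc E (dist_add P U) v) - int (exc E P v) - int (exc E U v)"

definition has_cooperation_excess ::
  "('a \<Rightarrow> 'a \<Rightarrow> bool) \<Rightarrow> ('a \<Rightarrow> nat) \<Rightarrow> ('a \<Rightarrow> nat) \<Rightarrow> 'a \<Rightarrow> bool" where
  "has_cooperation_excess E P U v \<longleftrightarrow> cooperation_excess E P U v > 0"

end

theory Submission
  imports Defs
begin

text \<open>A cooperation vertex v holds no pebbles under P or U, hence none under P + U, so the
  last move of a sequence reaching v under P + U starts at a neighbour w carrying two pebbles: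
  w is 2-reachable under P + U, i.e. has positive excess there. If w were 2-reachable under P
  (or U) alone, one more move would reach v under P (or U); so w has excess 0 under both, and
  its cooperation excess is positive.\<close>

lemma simple_graph_edgeD:
  assumes "simple_graph V E" "E a b"
  shows "a \<in> V" "b \<in> V" "E b a" "a \<noteq> b"
  using assms unfolding simple_graph_def by metis+

lemma sum_pebbling_move:
  fixes Q :: "'a \<Rightarrow> nat"
  assumes "finite V" "a \<in> V" "b \<in> V" "a \<noteq> b" "2 \<le> Q a"
  shows "sum (Q(a := Q a - 2, b := Q b + 1)) V + 1 = sum Q V"
proof -
  let ?R = "V - {a, b}"
  have V: "V = insert a (insert b ?R)" using assms by auto
  have "sum (Q(a := Q a - 2, b := Q b + 1)) ?R = sum Q ?R"
    by (rule sum.cong) auto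
  then show ?thesis
    by (subst (1 2) V) (use assms in \<open>simp add: sum.insert\<close>)
qed

lemma pebbling_moves_distribution_sum_le:
  assumes "simple_graph V E" "distribution V P" "(pebbling_move E)\<^sup>*\<^sup>* P Q"
  shows "distribution V Q \<and> sum Q V \<le> sum P V"
  using assms(3)
proof (induction rule: rtranclp_induct)
  case base
  then show ?case using assms(2) by simp
next
  case (step Q Q')
  then obtain a b where ab: "E a b" "2 \<le> Q a" "Q' = Q(a := Q a - 2, b := Q b + 1)"
    unfolding pebbling_move_def by blast
  note edge = simple_graph_edgeD[OF assms(1) ab(1)]
  have "finite V" using assms(1) unfolding simple_graph_def by blast
  then have "sum Q' V + 1 = sum Q V"
    using sum_pebbling_move[OF _ edge(1,2,4), of Q] ab(2,3) by simp
  moreover have "distribution V Q'"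
    using step.IH edge ab(3) unfolding distribution_def by auto
  ultimately show ?case using step.IH by simp
qed

lemma distribution_dist_add:
  "distribution V P \<Longrightarrow> distribution V U \<Longrightarrow> distribution V (dist_add P U)"
  unfolding distribution_def dist_add_def by simp

lemma k_reachable_le_sum:
  assumes "simple_graph V E" "distribution V P" "v \<in> V" "k_reachable E P v k"
  shows "k \<le> sum P V"
proof -
  obtain Q where Q: "(pebbling_move E)\<^sup>*\<^sup>* P Q" "k \<le> Q v"
    using assms(4) unfolding k_reachable_def by blast
  have "finite V" using assms(1) unfolding simple_graph_def by blast
  then have "Q v \<le> sum Q V" using assms(3) by (simp add: member_le_sum)
  then show ?thesis using pebbling_moves_distribution_sum_le[OF assms(1,2) Q(1)] Q(2) by linarith
qed

lemma k_reachable_mono: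
  "k_reachable E P v k \<Longrightarrow> j \<le> k \<Longrightarrow> k_reachable E P v j"
  unfolding k_reachable_def by (meson order_trans)

lemma k_reachable_iff_le_reach:
  assumes "simple_graph V E" "distribution V P" "v \<in> V"
  shows "k_reachable E P v k \<longleftrightarrow> k \<le> reach E P v"
proof
  have bounded: "\<And>k. k_reachable E P v k \<Longrightarrow> k \<le> sum P V"
    using k_reachable_le_sum[OF assms] .
  show "k \<le> reach E P v" if "k_reachable E P v k"
    unfolding reach_def using that bounded by (rule Greatest_le_nat)
  have "k_reachable E P v 0" unfolding k_reachable_def by blast
  then have "k_reachable E P v (reach E P v)"
    unfolding reach_def using bounded by (rule GreatestI_nat)
  then show "k_reachable E P v k" if "k \<le> reach E P v"
    using that by (rule k_reachable_mono)
qed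

lemma exc_pos_iff_k_reachable_2:
  assumes "simple_graph V E" "distribution V P" "v \<in> V"
  shows "0 < exc E P v \<longleftrightarrow> k_reachable E P v 2"
  using k_reachable_iff_le_reach[OF assms, of 1] k_reachable_iff_le_reach[OF assms, of 2]
  unfolding exc_def reachable_def by (simp, arith)

lemma zero_if_not_reachable:
  "\<not> reachable E P v \<Longrightarrow> P v = 0"
  unfolding reachable_def k_reachable_def by auto

lemma reachable_if_neighbour_k_reachable_2:
  assumes "k_reachable E P w 2" "E w v"
  shows "reachable E P v"
proof -
  obtain Q where Q: "(pebbling_move E)\<^sup>*\<^sup>* P Q" "2 \<le> Q w"
    using assms(1) unfolding k_reachable_def by blast
  let ?Q' = "Q(w := Q w - 2, v := Q v + 1)"
  have "pebbling_move E Q ?Q'" unfolding pebbling_move_def using assms(2) Q(2) by blast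
  with Q(1) have "(pebbling_move E)\<^sup>*\<^sup>* P ?Q'" by simp
  then show ?thesis unfolding reachable_def k_reachable_def by (intro exI[of _ ?Q']) auto
qed

lemma exc_eq_0_if_neighbour_not_reachable:
  assumes "simple_graph V E" "distribution V P" "E w v" "\<not> reachable E P v"
  shows "exc E P w = 0"
proof -
  have "\<not> k_reachable E P w 2"
    using reachable_if_neighbour_k_reachable_2[of E P w v] assms(3,4) by blast
  then show ?thesis
    using exc_pos_iff_k_reachable_2[OF assms(1,2) simple_graph_edgeD(1)[OF assms(1,3)]] by simp
qed

lemma neighbour_k_reachable_2_if_reachable_empty:
  assumes "reachable E P v" "P v = 0"
  shows "\<exists>w. E w v \<and> k_reachable E P w 2"
proof -
  obtain Q where "(pebbling_move E)\<^sup>*\<^sup>* P Q" "1 \<le> Q v"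
    using assms(1) unfolding reachable_def k_reachable_def by blast
  then show ?thesis
  proof (induction rule: rtranclp_induct)
    case base
    then show ?case using assms(2) by simp
  next
    case (step Q Q')
    show ?case
    proof (cases "1 \<le> Q v")
      case True
      then show ?thesis using step.IH by blast
    next
      case False
      obtain a b where ab: "E a b" "2 \<le> Q a" "Q' = Q(a := Q a - 2, b := Q b + 1)"
        using step.hyps(2) unfolding pebbling_move_def by blast
      have "b = v" using False step.prems ab(2,3) by (auto split: if_splits)
      then show ?thesis
        using ab step.hyps(1) unfolding k_reachable_def by blast
    qed
  qed
qed

theorem claim3p4:
  fixes V :: "'a set" and E :: "'a \<Rightarrow> 'a \<Rightarrow> bool"
    and P U :: "'a \<Rightarrow> nat" and u :: 'a and t :: nat
  assumes "simple_graph V E"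
    and "distribution V P"
    and "u \<in> V" and "t > 0"
    and "U = (\<lambda>x. if x = u then t else 0)"
    and "disjoint_dist P U"
  shows "\<forall>v \<in> V. cooperation_vertex E P U v \<longrightarrow>
           (\<exists>w. E v w \<and> has_cooperation_excess E P U w)"
proof (intro ballI impI)
  fix v assume "v \<in> V" and "cooperation_vertex E P U v"
  then have P: "\<not> reachable E P v" and U: "\<not> reachable E U v"
    and PU: "reachable E (dist_add P U) v" unfolding cooperation_vertex_def by auto
  have "dist_add P U v = 0"
    using zero_if_not_reachable[OF P] zero_if_not_reachable[OF U] by (simp add: dist_add_def)
  then obtain w where w: "E w v" "k_reachable E (dist_add P U) w 2"
    using neighbour_k_reachable_2_if_reachable_empty[OF PU] by blast
  have dU: "distribution V U" using assms(3,5) unfolding distribution_def by auto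
  note dPU = distribution_dist_add[OF assms(2) dU]
  note wV = simple_graph_edgeD(1)[OF assms(1) w(1)]
  have "0 < exc E (dist_add P U) w" using exc_pos_iff_k_reachable_2[OF assms(1) dPU wV] w(2) by blast
  moreover have "exc E P w = 0" "exc E U w = 0"
    using exc_eq_0_if_neighbour_not_reachable[OF assms(1) _ w(1)] assms(2) dU P U by blast+
  ultimately have "has_cooperation_excess E P U w"
    unfolding has_cooperation_excess_def cooperation_excess_def by simp
  then show "\<exists>w. E v w \<and> has_cooperation_excess E P U w"
    using simple_graph_edgeD(3)[OF assms(1) w(1)] by blast
qed

end
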